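(* Let $X$ be a space with $|X|<\mathfrak{b}$. (a) If $X$ is absolutely strongly star-Lindelöf, then $X$ is selectively strongly star-Hurewicz. (b) If $X$ is absolutely Star-$\sigma$-cd, then $X$ satisfies $selSS^*_{cd}(\mathcal{O},\Gamma)$: for every sequence $(\mathcal{U}_n:n\in\omega)$ of open covers and every sequence $(D_n:n\in\omega)$ of dense subsets there are sets $C_n\subseteq D_n$, closed and discrete in $X$, such that every $x\in X$ lies in $St(C_n,\mathcal{U}_n)$ for all but finitely many $n$.
   Context: All spaces are regular. $St(A,\mathcal{U})=\bigcup\{U\in\mathcal{U}:U\cap A\neq\emptyset\}$. $\mathfrak{b}$ is the bounding number. $X$ is absolutely strongly star-Lindelöf if for every open cover $\mathcal{U}$ and every dense $D\subseteq X$ there is a countable $C\subseteq D$ with $St(C,\mathcal{U})=X$. $X$ is selectively strongly star-Hurewicz if for every sequence $(\mathcal{U}_n)$ of open covers and every sequence $(D_n)$ of dense subsets there are finite $F_n\subseteq D_n$ such that every $x\in X$ lies in $St(F_n,\mathcal{U}_n)$ for all but finitely many $n$. $X$ is absolutely Star-$\sigma$-cd if for every dense $D\subseteq X$ and every open cover $\mathcal{U}$ there is $K\subseteq D$ which is a countable union of closed discrete subsets of $X$ with $St(K,\mathcal{U})=X$. *)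

theory Defs
  imports "HOL-Analysis.Analysis"
begin

definition star :: "'a set \<Rightarrow> 'a set set \<Rightarrow> 'a set" where
  "star A \<U> = \<Union>{U \<in> \<U>. U \<inter> A \<noteq> {}}"

definition open_cover :: "'a topology \<Rightarrow> 'a set set \<Rightarrow> bool" where
  "open_cover X \<U> \<longleftrightarrow> (\<forall>U\<in>\<U>. openin X U) \<and> \<Union>\<U> = topspace X"

definition dense_in :: "'a topology \<Rightarrow> 'a set \<Rightarrow> bool" where
  "dense_in X D \<longleftrightarrow> D \<subseteq> topspace X \<and> X closure_of D = topspace X"

definition closed_discrete :: "'a topology \<Rightarrow> 'a set \<Rightarrow> bool" where
  "closed_discrete X C \<longleftrightarrow> C \<subseteq> topspace X \<and> closedin X C \<and>
     subtopology X C = discrete_topology C"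

text \<open>Eventual domination bounded family in nat^nat; the bounding number b is the least
 cardinality of an unbounded family. |A| < b iff |A| < |F| for every unbounded F.\<close>
definition eventually_bounded :: "(nat \<Rightarrow> nat) set \<Rightarrow> bool" where
  "eventually_bounded F \<longleftrightarrow> (\<exists>g. \<forall>f\<in>F. \<forall>\<^sub>F n in sequentially. f n \<le> g n)"

definition card_less_bounding :: "'a set \<Rightarrow> bool" where
  "card_less_bounding A \<longleftrightarrow>
     (\<forall>F :: (nat \<Rightarrow> nat) set. \<not> eventually_bounded F \<longrightarrow> ordLess2 (card_of A) (card_of F))"

definition abs_strongly_star_Lindelof :: "'a topology \<Rightarrow> bool" where
  "abs_strongly_star_Lindelof X \<longleftrightarrow>
     (\<forall>\<U> D. open_cover X \<U> \<and> dense_in X D \<longrightarrow>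
        (\<exists>C. C \<subseteq> D \<and> countable C \<and> star C \<U> = topspace X))"

definition sel_strongly_star_Hurewicz :: "'a topology \<Rightarrow> bool" where
  "sel_strongly_star_Hurewicz X \<longleftrightarrow>
     (\<forall>\<U> :: nat \<Rightarrow> 'a set set. \<forall>D :: nat \<Rightarrow> 'a set.
        (\<forall>n. open_cover X (\<U> n) \<and> dense_in X (D n)) \<longrightarrow>
        (\<exists>F :: nat \<Rightarrow> 'a set. (\<forall>n. finite (F n) \<and> F n \<subseteq> D n) \<and>
           (\<forall>x\<in>topspace X. \<forall>\<^sub>F n in sequentially. x \<in> star (F n) (\<U> n))))"

definition abs_star_sigma_cd :: "'a topology \<Rightarrow> bool" where
  "abs_star_sigma_cd X \<longleftrightarrow>
     (\<forall>\<U> D. open_cover X \<U> \<and> dense_in X D \<longrightarrow>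
        (\<exists>K. K \<subseteq> D \<and> (\<exists>C :: nat \<Rightarrow> 'a set. (\<forall>k. closed_discrete X (C k)) \<and> K = (\<Union>k. C k))
             \<and> star K \<U> = topspace X))"

definition selSS_cd_O_Gamma :: "'a topology \<Rightarrow> bool" where
  "selSS_cd_O_Gamma X \<longleftrightarrow>
     (\<forall>\<U> :: nat \<Rightarrow> 'a set set. \<forall>D :: nat \<Rightarrow> 'a set.
        (\<forall>n. open_cover X (\<U> n) \<and> dense_in X (D n)) \<longrightarrow>
        (\<exists>C :: nat \<Rightarrow> 'a set. (\<forall>n. C n \<subseteq> D n \<and> closed_discrete X (C n)) \<and>
           (\<forall>x\<in>topspace X. \<forall>\<^sub>F n in sequentially. x \<in> star (C n) (\<U> n))))"

end

theory Submission
  imports Defs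
begin

text \<open>
  For each n the hypothesis yields a set C(n) \<subseteq> D(n)
  with St(C(n), U(n)) = X, and C(n) is the union of an increasing sequence
  A(n,0) \<subseteq> A(n,1) \<subseteq> ... of sets of the required kind (finite, resp. finite unions of
  closed discrete sets). Each point x determines f_x(n), the least k with
  x \<in> St(A(n,k), U(n)). Since |X| < b, the family of all f_x is eventually dominated
  by a single g, and A(n, g(n)) is the required selection.
\<close>

lemma card_less_bounding_imp_eventually_bounded:
  assumes "card_less_bounding S"
  shows "eventually_bounded (f ` S)"
proof (rule ccontr)
  assume "\<not> eventually_bounded (f ` S)"
  with assms have "ordLess2 (card_of S) (card_of (f ` S))"
    unfolding card_less_bounding_def by blast
  then show False
    using card_of_image not_ordLess_ordLeq by blast
qed

lemma card_less_bounding_eventually_monotone_choice: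
  fixes P :: "nat \<Rightarrow> nat \<Rightarrow> 'a \<Rightarrow> bool"
  assumes "card_less_bounding S"
    and ex: "\<And>n x. x \<in> S \<Longrightarrow> \<exists>k. P n k x"
    and mono: "\<And>n x k k'. P n k x \<Longrightarrow> k \<le> k' \<Longrightarrow> P n k' x"
  shows "\<exists>g. \<forall>x\<in>S. \<forall>\<^sub>F n in sequentially. P n (g n) x"
proof -
  define f where "f x = (\<lambda>n. LEAST k. P n k x)" for x
  obtain g where g: "\<forall>h\<in>f ` S. \<forall>\<^sub>F n in sequentially. h n \<le> g n"
    using card_less_bounding_imp_eventually_bounded[OF assms(1)]
    unfolding eventually_bounded_def by blast
  have "\<forall>\<^sub>F n in sequentially. P n (g n) x" if x: "x \<in> S" for x
  proof -
    have least: "P n (f x n) x" for n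
      unfolding f_def using ex[OF x] by (rule LeastI_ex)
    have "\<forall>\<^sub>F n in sequentially. f x n \<le> g n"
      using g x by blast
    then show ?thesis
      by (rule eventually_mono) (use mono least in blast)
  qed
  then show ?thesis by blast
qed

lemma star_mono: "A \<subseteq> B \<Longrightarrow> star A \<U> \<subseteq> star B \<U>"
  unfolding star_def by blast

lemma star_UN: "star (\<Union>i\<in>I. A i) \<U> = (\<Union>i\<in>I. star (A i) \<U>)"
  unfolding star_def by blast

lemma star_incseq_eventually_choice:
  fixes A :: "nat \<Rightarrow> nat \<Rightarrow> 'a set"
  assumes "card_less_bounding S"
    and "\<And>n. incseq (A n)"
    and "\<And>n. S \<subseteq> star (\<Union>k. A n k) (\<U> n)"
  shows "\<exists>g. \<forall>x\<in>S. \<forall>\<^sub>F n in sequentially. x \<in> star (A n (g n)) (\<U> n)"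
proof (rule card_less_bounding_eventually_monotone_choice[OF assms(1)])
  fix n x assume "x \<in> S"
  then show "\<exists>k. x \<in> star (A n k) (\<U> n)"
    using assms(3)[of n] by (auto simp: star_UN)
next
  fix n x k k' assume "x \<in> star (A n k) (\<U> n)" "k \<le> k'"
  then show "x \<in> star (A n k') (\<U> n)"
    using star_mono[OF monoD[OF assms(2) \<open>k \<le> k'\<close>]] by blast
qed

lemma countable_incseq_finite_exhaustion:
  assumes "countable C"
  obtains A :: "nat \<Rightarrow> 'a set" where "incseq A" "\<And>k. finite (A k)" "(\<Union>k. A k) = C"
proof (cases "C = {}")
  case True
  then show ?thesis by (intro that[of "\<lambda>k. {}"]) (auto simp: incseq_def)
next
  case False
  define A where "A k = from_nat_into C ` {..k}" for k
  have "(\<Union>k. A k) = range (from_nat_into C)"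
    unfolding A_def by auto
  with False assms have "(\<Union>k. A k) = C" by simp
  moreover have "incseq A"
    unfolding A_def incseq_def by auto
  ultimately show ?thesis
    using that unfolding A_def by blast
qed

lemma closed_discrete_iff_derived_set_empty:
  "closed_discrete X C \<longleftrightarrow> C \<subseteq> topspace X \<and> X derived_set_of C = {}"
  unfolding closed_discrete_def subtopology_eq_discrete_topology_eq closedin_contains_derived_set
  by blast

lemma closed_discrete_finite_UN:
  assumes "finite I" and "\<And>i. i \<in> I \<Longrightarrow> closed_discrete X (C i)"
  shows "closed_discrete X (\<Union>i\<in>I. C i)"
proof -
  have "X derived_set_of (\<Union>i\<in>I. C i) = (\<Union>i\<in>I. X derived_set_of C i)"
    using derived_set_of_Union[of "C ` I" X] assms(1) by simp
  with assms(2) show ?thesis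
    unfolding closed_discrete_iff_derived_set_empty by auto
qed

lemma abs_strongly_star_Lindelof_imp_sel_strongly_star_Hurewicz:
  assumes "card_less_bounding (topspace X)" and "abs_strongly_star_Lindelof X"
  shows "sel_strongly_star_Hurewicz X"
  unfolding sel_strongly_star_Hurewicz_def
proof (intro allI impI)
  fix \<U> :: "nat \<Rightarrow> 'a set set" and D
  assume covers: "\<forall>n. open_cover X (\<U> n) \<and> dense_in X (D n)"
  have "\<exists>C. C \<subseteq> D n \<and> countable C \<and> star C (\<U> n) = topspace X" for n
    using assms(2)[unfolded abs_strongly_star_Lindelof_def, rule_format, of "\<U> n" "D n"] covers
    by blast
  then obtain C where C: "\<And>n. C n \<subseteq> D n" "\<And>n. countable (C n)"
    "\<And>n. star (C n) (\<U> n) = topspace X"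
    by metis
  have "\<exists>A. incseq A \<and> (\<forall>k. finite (A k)) \<and> (\<Union>k. A k) = C n" for n
    by (rule countable_incseq_finite_exhaustion[OF C(2)]) blast
  then obtain A where A: "\<And>n. incseq (A n)" "\<And>n k. finite (A n k)" "\<And>n. (\<Union>k. A n k) = C n"
    by metis
  have "topspace X \<subseteq> star (\<Union>k. A n k) (\<U> n)" for n
    using A(3) C(3) by simp
  then obtain g where g: "\<forall>x\<in>topspace X. \<forall>\<^sub>F n in sequentially. x \<in> star (A n (g n)) (\<U> n)"
    using star_incseq_eventually_choice[of "topspace X" A \<U>, OF assms(1) A(1)] by blast
  have "A n (g n) \<subseteq> D n" for n
    using A(3)[of n] C(1)[of n] by blast
  with A(2) g show "\<exists>F. (\<forall>n. finite (F n) \<and> F n \<subseteq> D n) \<and>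
      (\<forall>x\<in>topspace X. \<forall>\<^sub>F n in sequentially. x \<in> star (F n) (\<U> n))"
    by (intro exI[of _ "\<lambda>n. A n (g n)"]) simp
qed

lemma abs_star_sigma_cdE:
  assumes "abs_star_sigma_cd X" "open_cover X \<U>" "dense_in X D"
  obtains C :: "nat \<Rightarrow> 'a set"
  where "\<And>j. closed_discrete X (C j)" "(\<Union>j. C j) \<subseteq> D" "star (\<Union>j. C j) \<U> = topspace X"
proof -
  obtain K where K: "K \<subseteq> D" "star K \<U> = topspace X"
    and "\<exists>C :: nat \<Rightarrow> 'a set. (\<forall>j. closed_discrete X (C j)) \<and> K = (\<Union>j. C j)"
    using assms(1)[unfolded abs_star_sigma_cd_def, rule_format, OF conjI[OF assms(2,3)]]
    by blast
  then obtain C :: "nat \<Rightarrow> 'a set" where "\<forall>j. closed_discrete X (C j)" "K = (\<Union>j. C j)"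
    by blast
  with K show thesis
    by (intro that[of C]) simp_all
qed

lemma abs_star_sigma_cd_imp_selSS_cd_O_Gamma:
  assumes "card_less_bounding (topspace X)" and "abs_star_sigma_cd X"
  shows "selSS_cd_O_Gamma X"
  unfolding selSS_cd_O_Gamma_def
proof (intro allI impI)
  fix \<U> :: "nat \<Rightarrow> 'a set set" and D
  assume covers: "\<forall>n. open_cover X (\<U> n) \<and> dense_in X (D n)"
  have "\<forall>n. \<exists>C :: nat \<Rightarrow> 'a set. (\<forall>j. closed_discrete X (C j)) \<and> (\<Union>j. C j) \<subseteq> D n
      \<and> star (\<Union>j. C j) (\<U> n) = topspace X"
  proof
    fix n
    from covers have cover: "open_cover X (\<U> n)" and dense: "dense_in X (D n)"
      by auto
    show "\<exists>C :: nat \<Rightarrow> 'a set. (\<forall>j. closed_discrete X (C j)) \<and> (\<Union>j. C j) \<subseteq> D n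
      \<and> star (\<Union>j. C j) (\<U> n) = topspace X"
      by (rule abs_star_sigma_cdE[OF assms(2) cover dense]) blast
  qed
  then obtain C :: "nat \<Rightarrow> nat \<Rightarrow> 'a set" where C': "\<forall>n. (\<forall>j. closed_discrete X (C n j))
      \<and> (\<Union>j. C n j) \<subseteq> D n \<and> star (\<Union>j. C n j) (\<U> n) = topspace X"
    by (auto dest: choice)
  then have C: "\<And>n j. closed_discrete X (C n j)" "\<And>n. (\<Union>j. C n j) \<subseteq> D n"
    "\<And>n. star (\<Union>j. C n j) (\<U> n) = topspace X"
    by auto
  define A where "A n k = (\<Union>j\<in>{..k}. C n j)" for n k
  have "incseq (A n)" for n
    unfolding A_def incseq_def by (meson UN_mono atMost_subset_iff order_refl)
  moreover have "topspace X \<subseteq> star (\<Union>k. A n k) (\<U> n)" for n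
  proof -
    have "(\<Union>k. A n k) = (\<Union>j. C n j)"
      unfolding A_def by auto
    then show ?thesis
      using C(3) by simp
  qed
  ultimately obtain g
    where g: "\<forall>x\<in>topspace X. \<forall>\<^sub>F n in sequentially. x \<in> star (A n (g n)) (\<U> n)"
    using star_incseq_eventually_choice[of "topspace X" A \<U>, OF assms(1)] by blast
  have "A n (g n) \<subseteq> D n" for n
    unfolding A_def using C(2)[of n] by blast
  moreover have "closed_discrete X (A n k)" for n k
    unfolding A_def by (intro closed_discrete_finite_UN C(1)) simp
  ultimately show "\<exists>C'. (\<forall>n. C' n \<subseteq> D n \<and> closed_discrete X (C' n)) \<and>
      (\<forall>x\<in>topspace X. \<forall>\<^sub>F n in sequentially. x \<in> star (C' n) (\<U> n))"
    using g by (intro exI[of _ "\<lambda>n. A n (g n)"]) simp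
qed

theorem mainTheorem5:
  fixes X :: "'a topology"
  assumes "regular_space X"
    and "card_less_bounding (topspace X)"
  shows "(abs_strongly_star_Lindelof X \<longrightarrow> sel_strongly_star_Hurewicz X) \<and>
         (abs_star_sigma_cd X \<longrightarrow> selSS_cd_O_Gamma X)"
  using assms(2) abs_strongly_star_Lindelof_imp_sel_strongly_star_Hurewicz
    abs_star_sigma_cd_imp_selSS_cd_O_Gamma by blast

end
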